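(* For each $\tau\in(0,1)$ and any real-valued random variable $W$ with finite expectation which is not almost surely constant, there exist real-valued random variables $U$ and $V$ with $\mathbb{E} U \neq \mathbb{E} V$ such that \[ \mathbb{P}(W\in C) = (1-\tau)\,\mathbb{P}(U\in C) + \tau\,\mathbb{P}(V\in C) \] for all Borel sets $C\subseteq\mathbb{R}$. Moreover, if $W$ has finite variance, then $U$ and $V$ can be chosen to have finite variances as well. *)

theory Defs
  imports "HOL-Probability.Probability"
begin

end

theory Submission
  imports Defs
begin

(* Realise W as G \<omega> with \<omega> uniform on (0,1) and G the quantile function of W. Cutting (0,1)
   at 1 - \<tau> and rescaling both pieces back to (0,1) gives U s = G ((1 - \<tau>) s) and
   V s = G (1 - \<tau> + \<tau> s), whose laws mix with weights 1 - \<tau> and \<tau> to the law of W.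
   Since G is monotone, U \<le> G (1 - \<tau>) \<le> V, so equal means force U = V = G (1 - \<tau>) almost
   surely, and then W is almost surely constant. *)

lemma nn_integral_interval_rescale:
  fixes f :: "real \<Rightarrow> ennreal" and a b :: real
  assumes [measurable]: "f \<in> borel_measurable borel" and "a < b"
  shows "(\<integral>\<^sup>+x. f x * indicator {a<..<b} x \<partial>lborel) =
    ennreal (b - a) * (\<integral>\<^sup>+s. f (a + (b - a) * s) * indicator {0<..<1} s \<partial>lborel)"
proof -
  have "a + (b - a) * s \<in> {a<..<b} \<longleftrightarrow> s \<in> {0<..<1}" for s
  proof -
    have "0 < b - a"
      using assms(2) by simp
    then have "0 < (b - a) * s \<longleftrightarrow> 0 < s" "(b - a) * s < (b - a) * 1 \<longleftrightarrow> s < 1"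
      by (simp_all add: zero_less_mult_iff)
    then show ?thesis
      by auto
  qed
  then have indicator_rescaled: "indicator {a<..<b} (a + (b - a) * s) = (indicator {0<..<1} s :: ennreal)" for s
    unfolding indicator_def by presburger
  have "(\<integral>\<^sup>+x. f x * indicator {a<..<b} x \<partial>lborel) =
      ennreal \<bar>b - a\<bar> * (\<integral>\<^sup>+s. f (a + (b - a) * s) * indicator {a<..<b} (a + (b - a) * s) \<partial>lborel)"
    using assms(2) by (intro nn_integral_real_affine) auto
  also have "\<dots> = ennreal (b - a) * (\<integral>\<^sup>+s. f (a + (b - a) * s) * indicator {0<..<1} s \<partial>lborel)"
    using assms(2) by (simp only: indicator_rescaled abs_of_pos diff_gt_0_iff_gt)
  finally show ?thesis .
qed

lemma nn_integral_unit_interval_split: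
  fixes f :: "real \<Rightarrow> ennreal" and \<tau> :: real
  assumes [measurable]: "f \<in> borel_measurable borel" and "0 < \<tau>" "\<tau> < 1"
  shows "(\<integral>\<^sup>+\<omega>. f \<omega> \<partial>restrict_space lborel {0<..<1}) =
    ennreal (1 - \<tau>) * (\<integral>\<^sup>+s. f ((1 - \<tau>) * s) \<partial>restrict_space lborel {0<..<1}) +
    ennreal \<tau> * (\<integral>\<^sup>+s. f (1 - \<tau> + \<tau> * s) \<partial>restrict_space lborel {0<..<1})"
proof -
  have "AE \<omega> in lborel. f \<omega> * indicator {0<..<1} \<omega> =
      f \<omega> * indicator {0<..<1 - \<tau>} \<omega> + f \<omega> * indicator {1 - \<tau><..<1} \<omega>"
    using AE_lborel_singleton[of "1 - \<tau>"]
    by eventually_elim (use assms(2,3) in \<open>auto simp: indicator_def\<close>)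
  then have "(\<integral>\<^sup>+\<omega>. f \<omega> * indicator {0<..<1} \<omega> \<partial>lborel) =
      (\<integral>\<^sup>+\<omega>. f \<omega> * indicator {0<..<1 - \<tau>} \<omega> + f \<omega> * indicator {1 - \<tau><..<1} \<omega> \<partial>lborel)"
    by (rule nn_integral_cong_AE)
  also have "\<dots> = (\<integral>\<^sup>+\<omega>. f \<omega> * indicator {0<..<1 - \<tau>} \<omega> \<partial>lborel) +
      (\<integral>\<^sup>+\<omega>. f \<omega> * indicator {1 - \<tau><..<1} \<omega> \<partial>lborel)"
    by (rule nn_integral_add) simp_all
  also have "(\<integral>\<^sup>+\<omega>. f \<omega> * indicator {0<..<1 - \<tau>} \<omega> \<partial>lborel) =
      ennreal (1 - \<tau>) * (\<integral>\<^sup>+s. f ((1 - \<tau>) * s) * indicator {0<..<1} s \<partial>lborel)"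
    using nn_integral_interval_rescale[of f 0 "1 - \<tau>"] assms by simp
  also have "(\<integral>\<^sup>+\<omega>. f \<omega> * indicator {1 - \<tau><..<1} \<omega> \<partial>lborel) =
      ennreal \<tau> * (\<integral>\<^sup>+s. f (1 - \<tau> + \<tau> * s) * indicator {0<..<1} s \<partial>lborel)"
    using nn_integral_interval_rescale[of f "1 - \<tau>" 1] assms by simp
  finally show ?thesis
    by (subst (1 2 3) nn_integral_restrict_space) simp_all
qed

(* Outside (0,1) the generalized inverse of the cdf can be infinite; 0 is a junk value there. *)
definition quantile :: "real measure \<Rightarrow> real \<Rightarrow> real" where
  "quantile \<mu> \<omega> = (if \<omega> \<in> {0<..<1} then Inf {x. \<omega> \<le> cdf \<mu> x} else 0)"

lemma borel_measurable_quantile [measurable]: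
  assumes "real_distribution \<mu>"
  shows "quantile \<mu> \<in> borel_measurable borel"
proof -
  interpret cdf_distribution \<mu>
    using assms by (simp add: cdf_distribution_def)
  show ?thesis
    using measurable_CI unfolding quantile_def by (subst (asm) measurable_restrict_space_iff) auto
qed

lemma mono_on_quantile:
  assumes "real_distribution \<mu>"
  shows "mono_on {0<..<1} (quantile \<mu>)"
proof -
  interpret cdf_distribution \<mu>
    using assms by (simp add: cdf_distribution_def)
  show ?thesis
    using mono_I by (auto simp: quantile_def mono_on_def)
qed

lemma nn_integral_quantile:
  assumes "real_distribution \<mu>" and [measurable]: "h \<in> borel_measurable borel"
  shows "(\<integral>\<^sup>+y. h y \<partial>\<mu>) = (\<integral>\<^sup>+\<omega>. h (quantile \<mu> \<omega>) \<partial>restrict_space lborel {0<..<1})"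
proof -
  interpret cdf_distribution \<mu>
    using assms(1) by (simp add: cdf_distribution_def)
  have I_measurable: "I \<in> borel_measurable (restrict_space lborel {0<..<1})"
    using measurable_CI by (simp add: measurable_def space_restrict_space sets_restrict_space)
  have "(\<integral>\<^sup>+y. h y \<partial>\<mu>) = (\<integral>\<^sup>+\<omega>. h (I \<omega>) \<partial>restrict_space lborel {0<..<1})"
    by (subst distr_I_eq_M[symmetric], subst nn_integral_distr) (simp_all add: I_measurable)
  also have "\<dots> = (\<integral>\<^sup>+\<omega>. h (quantile \<mu> \<omega>) \<partial>restrict_space lborel {0<..<1})"
    by (intro nn_integral_cong) (simp add: quantile_def space_restrict_space)
  finally show ?thesis .
qed

lemma mono_on_unit_interval_split:
  fixes G :: "real \<Rightarrow> 'b::preorder"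
  assumes "mono_on {0<..<1} G" and "0 < \<tau>" "\<tau> < 1" and "s \<in> {0<..<1}"
  shows "G ((1 - \<tau>) * s) \<le> G (1 - \<tau>)" and "G (1 - \<tau>) \<le> G (1 - \<tau> + \<tau> * s)"
proof -
  have "0 < (1 - \<tau>) * s" "(1 - \<tau>) * s < 1 - \<tau>" "0 < \<tau> * s" "\<tau> * s < \<tau>"
    using assms(2-4) mult_strict_left_mono[of s 1 \<tau>] mult_strict_left_mono[of s 1 "1 - \<tau>"] by auto
  then have "(1 - \<tau>) * s \<in> {0<..<1}" "1 - \<tau> \<in> {0<..<1}" "1 - \<tau> + \<tau> * s \<in> {0<..<1}"
    using assms(2,3) unfolding greaterThanLessThan_iff by linarith+
  then show "G ((1 - \<tau>) * s) \<le> G (1 - \<tau>)" and "G (1 - \<tau>) \<le> G (1 - \<tau> + \<tau> * s)"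
    using \<open>(1 - \<tau>) * s < 1 - \<tau>\<close> \<open>0 < \<tau> * s\<close> by (auto intro!: mono_onD[OF assms(1)])
qed

lemma emeasure_vimage_eq_nn_integral:
  assumes "f \<in> measurable M S" and "C \<in> sets S"
  shows "emeasure M {x \<in> space M. f x \<in> C} = (\<integral>\<^sup>+x. indicator C (f x) \<partial>M)"
proof -
  have "(\<integral>\<^sup>+x. indicator C (f x) \<partial>M) = (\<integral>\<^sup>+x. indicator {x \<in> space M. f x \<in> C} x \<partial>M)"
    by (intro nn_integral_cong) (simp add: indicator_def)
  also have "\<dots> = emeasure M {x \<in> space M. f x \<in> C}"
    using measurable_sets[OF assms] by (intro nn_integral_indicator) (simp add: Int_def conj_commute)
  finally show ?thesis ..
qed

lemma (in prob_space) AE_eq_bound_if_integral_le: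
  fixes U V :: "'a \<Rightarrow> real"
  assumes "integrable M U" "integrable M V"
    and "\<And>x. x \<in> space M \<Longrightarrow> U x \<le> q" "\<And>x. x \<in> space M \<Longrightarrow> q \<le> V x"
    and "integral\<^sup>L M V \<le> integral\<^sup>L M U"
  shows "AE x in M. U x = q" and "AE x in M. V x = q"
proof -
  have "integral\<^sup>L M (\<lambda>x. q - U x) = q - integral\<^sup>L M U"
    "integral\<^sup>L M (\<lambda>x. V x - q) = integral\<^sup>L M V - q"
    using assms(1,2) by (simp_all add: prob_space)
  moreover have "integral\<^sup>L M (\<lambda>x. q - U x) \<ge> 0" "integral\<^sup>L M (\<lambda>x. V x - q) \<ge> 0"
    using assms(3,4) by (simp_all add: integral_nonneg)
  ultimately have "integral\<^sup>L M (\<lambda>x. q - U x) = 0" "integral\<^sup>L M (\<lambda>x. V x - q) = 0"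
    using assms(5) by linarith+
  moreover have "integrable M (\<lambda>x. q - U x)" "integrable M (\<lambda>x. V x - q)"
    using assms(1,2) by simp_all
  ultimately have "AE x in M. q - U x = 0" "AE x in M. V x - q = 0"
    using assms(3,4) by (simp_all add: integral_nonneg_eq_0_iff_AE)
  then show "AE x in M. U x = q" "AE x in M. V x = q"
    by (eventually_elim, simp)+
qed

(* Stated for all nonnegative test functions h: both the identity of laws and the transfer of
   integrability are then instances. *)
locale law_mixture = M: prob_space M + N: prob_space N
  for M :: "'a measure" and N :: "'b measure" and S :: "'c measure"
    and W :: "'a \<Rightarrow> 'c" and U V :: "'b \<Rightarrow> 'c" and \<tau> :: real +
  assumes W_measurable [measurable]: "W \<in> measurable M S"
    and U_measurable [measurable]: "U \<in> measurable N S"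
    and V_measurable [measurable]: "V \<in> measurable N S"
    and weight_pos: "0 < \<tau>" and weight_less_1: "\<tau> < 1"
    and nn_integral_mixture: "\<And>h. h \<in> borel_measurable S \<Longrightarrow>
      (\<integral>\<^sup>+x. h (W x) \<partial>M) = ennreal (1 - \<tau>) * (\<integral>\<^sup>+s. h (U s) \<partial>N) + ennreal \<tau> * (\<integral>\<^sup>+s. h (V s) \<partial>N)"
begin

lemma emeasure_mixture:
  assumes "C \<in> sets S"
  shows "emeasure M {x \<in> space M. W x \<in> C} =
    ennreal (1 - \<tau>) * emeasure N {s \<in> space N. U s \<in> C} + ennreal \<tau> * emeasure N {s \<in> space N. V s \<in> C}"
  using nn_integral_mixture[of "indicator C"] assms
  by (simp add: emeasure_vimage_eq_nn_integral[OF W_measurable]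
      emeasure_vimage_eq_nn_integral[OF U_measurable] emeasure_vimage_eq_nn_integral[OF V_measurable])

lemma measure_mixture:
  assumes "C \<in> sets S"
  shows "measure M {x \<in> space M. W x \<in> C} =
    (1 - \<tau>) * measure N {s \<in> space N. U s \<in> C} + \<tau> * measure N {s \<in> space N. V s \<in> C}"
proof -
  have "ennreal (measure M {x \<in> space M. W x \<in> C}) =
      ennreal ((1 - \<tau>) * measure N {s \<in> space N. U s \<in> C} + \<tau> * measure N {s \<in> space N. V s \<in> C})"
    using emeasure_mixture[OF assms] weight_pos weight_less_1
    by (simp add: M.emeasure_eq_measure N.emeasure_eq_measure ennreal_mult)
  moreover have "0 \<le> (1 - \<tau>) * measure N {s \<in> space N. U s \<in> C}" "0 \<le> \<tau> * measure N {s \<in> space N. V s \<in> C}"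
    using weight_pos weight_less_1 by simp_all
  ultimately show ?thesis
    by (simp add: ennreal_plus[symmetric] del: ennreal_plus)
qed

lemma integrable_components:
  fixes g :: "'c \<Rightarrow> 'd::{banach, second_countable_topology}"
  assumes [measurable]: "g \<in> borel_measurable S" and "integrable M (\<lambda>x. g (W x))"
  shows "integrable N (\<lambda>s. g (U s))" and "integrable N (\<lambda>s. g (V s))"
proof -
  have "ennreal (1 - \<tau>) * (\<integral>\<^sup>+s. norm (g (U s)) \<partial>N) + ennreal \<tau> * (\<integral>\<^sup>+s. norm (g (V s)) \<partial>N) < \<infinity>"
    using assms(2) nn_integral_mixture[of "\<lambda>y. norm (g y)"] by (simp add: integrable_iff_bounded)
  then show "integrable N (\<lambda>s. g (U s))" and "integrable N (\<lambda>s. g (V s))"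
    using weight_pos weight_less_1 by (auto simp: integrable_iff_bounded ennreal_mult_less_top)
qed

lemma AE_eq_const:
  assumes "{q} \<in> sets S" and "AE s in N. U s = q" and "AE s in N. V s = q"
  shows "AE x in M. W x = q"
proof -
  let ?h = "indicator (space S - {q}) :: 'c \<Rightarrow> ennreal"
  have [measurable]: "?h \<in> borel_measurable S"
    using assms(1) by measurable
  have "AE s in N. ?h (U s) = 0" "AE s in N. ?h (V s) = 0"
    using assms(2,3) by (auto elim: AE_mp)
  then have "(\<integral>\<^sup>+s. ?h (U s) \<partial>N) = 0" "(\<integral>\<^sup>+s. ?h (V s) \<partial>N) = 0"
    by (simp_all add: nn_integral_0_iff_AE)
  then have "(\<integral>\<^sup>+x. ?h (W x) \<partial>M) = 0"
    using nn_integral_mixture[of ?h] by simp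
  then show ?thesis
    using measurable_space[OF W_measurable] by (simp add: nn_integral_0_iff_AE indicator_eq_0_iff)
qed

end

lemma law_mixture_quantile_split:
  assumes "prob_space M" and "W \<in> borel_measurable M" and "0 < \<tau>" "\<tau> < 1"
  defines "G \<equiv> quantile (distr M borel W)"
  shows "law_mixture M (restrict_space lborel {0<..<1}) borel W
    (\<lambda>s. G ((1 - \<tau>) * s)) (\<lambda>s. G (1 - \<tau> + \<tau> * s)) \<tau>"
proof -
  have \<mu>: "real_distribution (distr M borel W)"
    using assms(1,2) by (simp add: prob_space.real_distribution_distr)
  have "prob_space (restrict_space lborel {0<..<1::real})"
    by (auto simp: emeasure_restrict_space space_restrict_space intro!: prob_spaceI)
  moreover have "(\<integral>\<^sup>+x. h (W x) \<partial>M) =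
      ennreal (1 - \<tau>) * (\<integral>\<^sup>+s. h (G ((1 - \<tau>) * s)) \<partial>restrict_space lborel {0<..<1}) +
      ennreal \<tau> * (\<integral>\<^sup>+s. h (G (1 - \<tau> + \<tau> * s)) \<partial>restrict_space lborel {0<..<1})"
    if [measurable]: "h \<in> borel_measurable borel" for h
  proof -
    have "(\<integral>\<^sup>+x. h (W x) \<partial>M) = (\<integral>\<^sup>+y. h y \<partial>distr M borel W)"
      using assms(2) by (simp add: nn_integral_distr)
    then show ?thesis
      unfolding nn_integral_quantile[OF \<mu> that] G_def
      using nn_integral_unit_interval_split[of "\<lambda>\<omega>. h (quantile (distr M borel W) \<omega>)"] assms(3,4) \<mu>
      by simp
  qed
  ultimately show ?thesis
    using assms(1-4) \<mu> unfolding G_def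
    by (simp add: law_mixture_def law_mixture_axioms_def measurable_restrict_space1)
qed

theorem proposition1p3:
  fixes M :: "'a measure" and W :: "'a \<Rightarrow> real" and \<tau> :: real
  assumes "prob_space M"
    and "W \<in> borel_measurable M"
    and "integrable M W"
    and "\<not> (\<exists>c. AE x in M. W x = c)"
    and "0 < \<tau>" and "\<tau> < 1"
  shows "\<exists>(N :: real measure) (U :: real \<Rightarrow> real) (V :: real \<Rightarrow> real).
           prob_space N \<and> U \<in> borel_measurable N \<and> V \<in> borel_measurable N \<and>
           integrable N U \<and> integrable N V \<and>
           integral\<^sup>L N U \<noteq> integral\<^sup>L N V \<and>
           (\<forall>C \<in> sets borel.
              measure M {x \<in> space M. W x \<in> C} =
                (1 - \<tau>) * measure N {x \<in> space N. U x \<in> C}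
                + \<tau> * measure N {x \<in> space N. V x \<in> C}) \<and>
           (integrable M (\<lambda>x. (W x)\<^sup>2) \<longrightarrow>
              integrable N (\<lambda>x. (U x)\<^sup>2) \<and> integrable N (\<lambda>x. (V x)\<^sup>2))"
proof -
  define G where "G = quantile (distr M borel W)"
  define N where "N = restrict_space lborel {0<..<1::real}"
  define U where "U = (\<lambda>s. G ((1 - \<tau>) * s))"
  define V where "V = (\<lambda>s. G (1 - \<tau> + \<tau> * s))"
  interpret law_mixture M N borel W U V \<tau>
    using law_mixture_quantile_split[OF assms(1,2,5,6)] by (simp add: G_def N_def U_def V_def)
  have U_integrable: "integrable N U" and V_integrable: "integrable N V"
    using integrable_components[of "\<lambda>y. y"] assms(3) by simp_all
  have "integral\<^sup>L N U \<noteq> integral\<^sup>L N V"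
  proof
    assume "integral\<^sup>L N U = integral\<^sup>L N V"
    moreover have "mono_on {0<..<1} G"
      unfolding G_def using assms(1,2) by (simp add: mono_on_quantile prob_space.real_distribution_distr)
    ultimately have "AE s in N. U s = G (1 - \<tau>)" "AE s in N. V s = G (1 - \<tau>)"
      using N.AE_eq_bound_if_integral_le[OF U_integrable V_integrable]
        mono_on_unit_interval_split[of G, OF _ assms(5,6)]
      by (simp_all add: N_def U_def V_def space_restrict_space)
    then have "AE x in M. W x = G (1 - \<tau>)"
      by (intro AE_eq_const) simp_all
    with assms(4) show False
      by blast
  qed
  then show ?thesis
    using N.prob_space_axioms U_measurable V_measurable U_integrable V_integrable measure_mixture
      integrable_components[of "\<lambda>y. y\<^sup>2"]
    by (intro exI[of _ N] exI[of _ U] exI[of _ V]) simp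
qed

end
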